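(* Let $x,y$ be non-commuting indeterminates and $C=xyx^{-1}y^{-1}$. Let $(R_n)_{n\in\mathbb Z}$ be the solution of $$R_{n+1}CR_{n-1}=R_n^2+1\qquad(n\in\mathbb Z)$$ with $R_0=yxy^{-1}$ and $R_1=y$. Let $$K=R_1R_0^{-1}+R_1^{-1}R_0^{-1}+R_1^{-1}R_0.$$ Then for all $n\in\mathbb Z$, $$R_{n+1}C+R_{n-1}=R_nK\qquad\text{and}\qquad R_{n+1}+CR_{n-1}=KR_n.$$
   Context: Work in the free skew field (non-commutative rational functions) over $\mathbb C$ generated by $x,y$. *)

theory Defs
  imports Main
begin

definition commC :: "'a::division_ring \<Rightarrow> 'a \<Rightarrow> 'a" where
  "commC x y = x * y * inverse x * inverse y"

definition invK :: "'a::division_ring \<Rightarrow> 'a \<Rightarrow> 'a" where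
  "invK R0 R1 = R1 * inverse R0 + inverse R1 * inverse R0 + inverse R1 * R0"

end

theory Submission
  imports Defs
begin

text \<open>
  Write a, b, c for three consecutive terms R (n - 1), R n, R (n + 1), so that c C a = b^2 + 1.
  Solving the recurrence for c C, resp. C a, gives the two identities
  c C + a = b K(a,b) and c + C a = K(b,c) b, where K(a,b) = b a^-1 + b^-1 a^-1 + b^-1 a.
  The quasi-commutation b C a = a b propagates along the sequence in both directions,
  since both it and c C b = b c are equivalent to c C b C a = b (b^2 + 1).
  It holds for n = 0 by the choice of initial values; given it at n - 1 and n, the two
  identities yield b K(b,c) b = b c + a b = b K(a,b) b, so K(a,b) does not depend on n.
\<close>

lemma int_induct_iff:
  fixes P :: "int \<Rightarrow> bool"
  assumes "P 0" and "\<And>n. P n \<longleftrightarrow> P (n + 1)"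
  shows "P n"
proof (induction n rule: int_induct[where k = 0])
  case base
  show ?case using assms(1) .
next
  case (step1 i)
  then show ?case using assms(2) by blast
next
  case (step2 i)
  then show ?case using assms(2)[of "i - 1"] by simp
qed

lemma quasi_commute_step_iff:
  fixes a b c C :: "'a::division_ring"
  assumes nz: "a \<noteq> 0" "c \<noteq> 0" "C \<noteq> 0" and rec: "c * C * a = b\<^sup>2 + 1"
  shows "b * C * a = a * b \<longleftrightarrow> c * C * b = b * c"
proof -
  have "b * C * a = a * b \<longleftrightarrow> c * C * (b * C * a) = c * C * (a * b)"
    using nz by (simp add: mult_left_cancel)
  also have "\<dots> \<longleftrightarrow> c * C * b * (C * a) = b * (b\<^sup>2 + 1)"
  proof -
    have "c * C * (a * b) = b * (b\<^sup>2 + 1)"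
      by (simp flip: mult.assoc add: rec power2_eq_square distrib_left distrib_right)
    then show ?thesis by (simp add: mult.assoc)
  qed
  also have "\<dots> \<longleftrightarrow> c * C * b * (C * a) = b * c * (C * a)"
    using rec by (simp add: mult.assoc)
  also have "\<dots> \<longleftrightarrow> c * C * b = b * c"
    using nz by (simp add: mult_right_cancel)
  finally show ?thesis .
qed

lemma invK_step_left:
  fixes a b c C :: "'a::division_ring"
  assumes "a \<noteq> 0" "b \<noteq> 0" and rec: "c * C * a = b\<^sup>2 + 1"
  shows "c * C + a = b * invK a b"
proof -
  have "c * C = (b\<^sup>2 + 1) * inverse a"
    using \<open>a \<noteq> 0\<close> by (simp flip: rec add: mult.assoc)
  then show ?thesis
    using assms by (simp add: invK_def distrib_left distrib_right power2_eq_square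
                              mult.assoc[symmetric])
qed

lemma invK_step_right:
  fixes a b c C :: "'a::division_ring"
  assumes "b \<noteq> 0" "c \<noteq> 0" and rec: "c * C * a = b\<^sup>2 + 1"
  shows "c + C * a = invK b c * b"
proof -
  have "C * a = inverse c * (b\<^sup>2 + 1)"
    using \<open>c \<noteq> 0\<close> by (simp flip: rec add: mult.assoc[symmetric])
  then show ?thesis
    using assms by (simp add: invK_def distrib_left distrib_right power2_eq_square mult.assoc)
qed

lemma invK_step_eq:
  fixes a b c C :: "'a::division_ring"
  assumes "a \<noteq> 0" "b \<noteq> 0" "c \<noteq> 0" and rec: "c * C * a = b\<^sup>2 + 1"
    and left: "b * C * a = a * b" and right: "c * C * b = b * c"
  shows "invK b c = invK a b"
proof -
  have "b * invK b c * b = b * (c + C * a)"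
    by (simp add: invK_step_right[OF \<open>b \<noteq> 0\<close> \<open>c \<noteq> 0\<close> rec] mult.assoc)
  also have "\<dots> = b * c + b * C * a"
    by (simp add: distrib_left mult.assoc)
  also have "\<dots> = (c * C + a) * b"
    using left right by (simp add: distrib_right add.commute)
  also have "\<dots> = b * invK a b * b"
    using invK_step_left[OF \<open>a \<noteq> 0\<close> \<open>b \<noteq> 0\<close> rec] by simp
  finally show ?thesis
    using \<open>b \<noteq> 0\<close> by (simp add: mult_right_cancel mult_left_cancel mult.assoc)
qed

lemma commC_conj_quasi_commute:
  fixes x y :: "'a::division_ring"
  assumes "x \<noteq> 0" "y \<noteq> 0"
  shows "y * commC x y * (y * x * inverse y) = (y * x * inverse y) * y"
proof -
  have "y * commC x y * (y * x * inverse y) = y * x * y * (inverse x * (inverse y * y) * x) * inverse y"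
    by (simp add: commC_def mult.assoc)
  also have "\<dots> = y * x"
    using assms by (simp add: mult.assoc)
  also have "\<dots> = (y * x * inverse y) * y"
    using assms by (simp add: mult.assoc)
  finally show ?thesis .
qed

theorem lemma3p2:
  fixes x y :: "'a::{division_ring, ring_char_0}" and R :: "int \<Rightarrow> 'a"
  assumes rec: "\<And>n. R (n + 1) * commC x y * R (n - 1) = R n ^ 2 + 1"
    and init0: "R 0 = y * x * inverse y"
    and init1: "R 1 = y"
    and nz: "\<And>n. R n \<noteq> 0"
  shows "\<forall>n. R (n + 1) * commC x y + R (n - 1) = R n * invK (R 0) (R 1)
           \<and> R (n + 1) + commC x y * R (n - 1) = invK (R 0) (R 1) * R n"
proof -
  let ?C = "commC x y"
  have "x \<noteq> 0" "y \<noteq> 0" using nz[of 0] nz[of 1] init0 init1 by auto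
  then have "?C \<noteq> 0" by (simp add: commC_def)
  have rec': "R (n + 2) * ?C * R n = R (n + 1) ^ 2 + 1" for n
    using rec[of "n + 1"] by (simp add: add.assoc)
  have quasi: "R (n + 1) * ?C * R n = R n * R (n + 1)" for n
  proof (rule int_induct_iff[where P = "\<lambda>n. R (n + 1) * ?C * R n = R n * R (n + 1)"])
    show "R (0 + 1) * ?C * R 0 = R 0 * R (0 + 1)"
      using commC_conj_quasi_commute[OF \<open>x \<noteq> 0\<close> \<open>y \<noteq> 0\<close>]
      by (simp only: add_0 init0 init1)
    show "R (n + 1) * ?C * R n = R n * R (n + 1) \<longleftrightarrow>
          R (n + 1 + 1) * ?C * R (n + 1) = R (n + 1) * R (n + 1 + 1)" for n
      using quasi_commute_step_iff[OF nz nz \<open>?C \<noteq> 0\<close> rec'] by (simp add: add.assoc)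
  qed
  have K_const: "invK (R n) (R (n + 1)) = invK (R 0) (R 1)" for n
  proof (rule int_induct_iff[where P = "\<lambda>n. invK (R n) (R (n + 1)) = invK (R 0) (R 1)"])
    show "invK (R n) (R (n + 1)) = invK (R 0) (R 1) \<longleftrightarrow>
          invK (R (n + 1)) (R (n + 1 + 1)) = invK (R 0) (R 1)" for n
      using invK_step_eq[OF nz nz nz rec' quasi[of n]] quasi[of "n + 1"] by (simp add: add.assoc)
  qed simp
  show ?thesis
  proof
    fix n
    show "R (n + 1) * ?C + R (n - 1) = R n * invK (R 0) (R 1)
          \<and> R (n + 1) + ?C * R (n - 1) = invK (R 0) (R 1) * R n"
      using invK_step_left[OF nz nz rec] invK_step_right[OF nz nz rec]
            K_const[of n] K_const[of "n - 1"] by simp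
  qed
qed

end
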